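(* Let $k\ge1$ be an integer. The expected number of fixed points of the permutation obtained by performing a $k$-riffle shuffle on $n$ cards followed by reversing the order of the cards is \[ 1-\frac{1}{k}+\frac{1}{k^2}-\cdots+\frac{(-1)^{n-1}}{k^{n-1}}.\]
   Context: A $k$-riffle shuffle on $n$ cards: cut the deck into $k$ consecutive piles of sizes $j_1,\dots,j_k$ with probability $\binom{n}{j_1,\dots,j_k}/k^n$, then drop cards one at a time, each time from a pile chosen with probability proportional to its current size. Reversing the order of the cards replaces the resulting permutation $w$ by $w\circ w_0$, $w_0(i)=n+1-i$. *)

theory Defs
  imports "HOL-Probability.Probability"
begin

definition cut_pmf :: "nat \<Rightarrow> nat \<Rightarrow> nat list pmf" where
  "cut_pmf k n = embed_pmf (\<lambda>js.
     if length js = k \<and> sum_list js = n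
     then fact n / (\<Prod>j\<leftarrow>js. fact j) / real k ^ n else 0)"

fun cut_deck :: "nat list \<Rightarrow> 'a list \<Rightarrow> 'a list list" where
  "cut_deck [] xs = []"
| "cut_deck (j # js) xs = take j xs # cut_deck js (drop j xs)"

text \<open>Dropping m cards one at a time: a pile is chosen with probability
  proportional to its current size (choose a uniformly random card position
  among all remaining cards and use its pile); the next card of that pile is
  dropped as the next card of the resulting deck.\<close>
primrec drop_cards :: "nat \<Rightarrow> 'a list list \<Rightarrow> 'a list pmf" where
  "drop_cards 0 ps = return_pmf []"
| "drop_cards (Suc m) ps =
     bind_pmf (pmf_of_set {(i, j). i < length ps \<and> j < length (ps ! i)})
       (\<lambda>(i, j). map_pmf (\<lambda>r. hd (ps ! i) # r)
                         (drop_cards m (ps[i := tl (ps ! i)])))"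

text \<open>The k-riffle shuffle of the deck [1,...,n]; result is the new deck,
  listed from top to bottom.\<close>
definition riffle_pmf :: "nat \<Rightarrow> nat \<Rightarrow> nat list pmf" where
  "riffle_pmf k n = bind_pmf (cut_pmf k n)
     (\<lambda>js. drop_cards n (cut_deck js [1..<n+1]))"

definition perm_of_deck :: "nat list \<Rightarrow> nat \<Rightarrow> nat" where
  "perm_of_deck d i = d ! (i - 1)"

definition w0 :: "nat \<Rightarrow> nat \<Rightarrow> nat" where
  "w0 n i = n + 1 - i"

definition num_fixed_points :: "nat \<Rightarrow> (nat \<Rightarrow> nat) \<Rightarrow> nat" where
  "num_fixed_points n w = card {i \<in> {1..n}. w i = i}"

end

(*
  Label each position of the shuffled deck by the pile its card came from. Cutting with
  multinomial probabilities and then dropping proportionally to pile sizes makes this label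
  word uniform on {0..<k}^n: a word with letter counts js arises from the cut js with
  probability multinomial(js) / k^n, and then with probability 1 / multinomial(js). The card
  at position t is one more than the position of t in the stable sort of the word, so the
  expected number of fixed points after reversal is N(n) / k^n, where N(n) counts pairs of a
  word and a position t with rank + t + 1 = n. Deleting the letter at position t gives
  N(m+1) + N(m) = k^(m+1): for a word M of length m and a letter v, the quantity
  rank(M, v, t) + t grows in steps of 1 or 2 (2 exactly when M ! t = v), so it either hits m
  or jumps over m, and does so exactly once.
*)

theory Submission
  imports Defs
begin

section \<open>Stable ranks and the number of reversed fixed points\<close>

text \<open>If \<open>L ! t = v\<close>, this is the position (counting from 0) of entry \<open>t\<close> once \<open>L\<close> is
  sorted stably.\<close>
definition stable_rank :: "nat list \<Rightarrow> nat \<Rightarrow> nat \<Rightarrow> nat" where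
  "stable_rank L v t = (\<Sum>a<v. count_list L a) + count_list (take t L) v"

lemma card_hit_or_skip:
  fixes f :: "nat \<Rightarrow> nat"
  assumes "\<And>t. t < m \<Longrightarrow> f (Suc t) = f t + (if b t then 2 else 1)"
    and "f 0 \<le> T" and "T \<le> f m"
  shows "card {t. t \<le> m \<and> f t = T} + card {t. t < m \<and> b t \<and> f t + 1 = T} = 1"
  using assms
proof (induction m)
  case 0
  then have "{t. t \<le> 0 \<and> f t = T} = {0}" by auto
  then show ?case by simp
next
  case (Suc m)
  have step: "f t < f (Suc t)" if "t \<le> m" for t
    using Suc.prems(1)[of t] that by simp
  have mono: "f t < f m'" if "t < m'" "m' \<le> Suc m" for t m'
    using that by (induction m') (auto simp: less_Suc_eq intro: less_trans step)
  show ?case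
  proof (cases "T \<le> f m")
    case True
    have "{t. t \<le> Suc m \<and> f t = T} = {t. t \<le> m \<and> f t = T}"
      using mono[of m "Suc m"] True by (auto simp: le_Suc_eq)
    moreover have "{t. t < Suc m \<and> b t \<and> f t + 1 = T} = {t. t < m \<and> b t \<and> f t + 1 = T}"
      using True by (auto simp: less_Suc_eq)
    ultimately show ?thesis using Suc.IH Suc.prems True by simp
  next
    case False
    have "f t \<le> f m" if "t \<le> m" for t
      using mono[of t m] that by (cases "t = m") auto
    then have "{t. t \<le> Suc m \<and> f t = T} = (if f (Suc m) = T then {Suc m} else {})"
      using False by (force simp: le_Suc_eq)
    moreover have "{t. t < Suc m \<and> b t \<and> f t + 1 = T} = (if b m \<and> f m + 1 = T then {m} else {})"
      using mono[of _ m] False by (force simp: less_Suc_eq)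
    ultimately show ?thesis using Suc.prems(1)[of m] Suc.prems(3) False by auto
  qed
qed

lemma count_list_take_less:
  assumes "t < length L"
  shows "count_list (take t L) (L ! t) < count_list L (L ! t)"
proof -
  have "count_list L (L ! t) = count_list (take t L) (L ! t) + count_list (drop t L) (L ! t)"
    by (metis append_take_drop_id count_list_append)
  moreover have "drop t L = L ! t # drop (Suc t) L"
    using assms by (rule Cons_nth_drop_Suc[symmetric])
  ultimately show ?thesis
    by simp
qed

lemma stable_rank_Suc:
  "t < length L \<Longrightarrow> stable_rank L v (Suc t) = stable_rank L v t + (if L ! t = v then 1 else 0)"
  by (simp add: stable_rank_def take_Suc_conv_app_nth)

lemma sum_count_list_lessThan_le: "(\<Sum>a<v. count_list L a) \<le> length (L :: nat list)"
proof -
  have "(\<Sum>a<v. count_list L a) \<le> (\<Sum>a\<in>{..<v} \<union> set L. count_list L a)"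
    by (rule sum_mono2) auto
  also have "\<dots> = length L"
    by (rule sum_count_set) auto
  finally show ?thesis .
qed

lemma stable_rank_0_le: "stable_rank L v 0 \<le> length L"
  by (simp add: stable_rank_def sum_count_list_lessThan_le)

lemma stable_rank_less_length:
  assumes "t < length L"
  shows "stable_rank L (L ! t) t < length L"
proof -
  have "count_list (take t L) (L ! t) < count_list L (L ! t)"
    using assms by (simp add: count_list_take_less)
  then have "stable_rank L (L ! t) t < (\<Sum>a<Suc (L ! t). count_list L a)"
    by (simp add: stable_rank_def)
  also have "\<dots> \<le> length L"
    by (rule sum_count_list_lessThan_le)
  finally show ?thesis .
qed

lemma card_stable_rank_hit_or_skip:
  assumes "length M = m"
  shows "card {t. t \<le> m \<and> stable_rank M v t + t = m}
       + card {t. t < m \<and> M ! t = v \<and> stable_rank M v t + t + 1 = m} = 1"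
proof (rule card_hit_or_skip[where f = "\<lambda>t. stable_rank M v t + t" and b = "\<lambda>t. M ! t = v"])
  show "stable_rank M v (Suc t) + Suc t = stable_rank M v t + t + (if M ! t = v then 2 else 1)"
    if "t < m" for t
    using stable_rank_Suc[of t M v] that assms by simp
  show "stable_rank M v 0 + 0 \<le> m"
    using stable_rank_0_le[of M v] assms by simp
qed simp

definition words :: "nat \<Rightarrow> nat \<Rightarrow> nat list set" where
  "words k n = {L. set L \<subseteq> {..<k} \<and> length L = n}"

lemma finite_words: "finite (words k n)"
  unfolding words_def by (rule finite_lists_length_eq) simp

lemma card_words: "card (words k n) = k ^ n"
  unfolding words_def using card_lists_length_eq[of "{..<k}" n] by simp

lemma words_nonempty: "k \<ge> 1 \<Longrightarrow> words k n \<noteq> {}"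
  using card_words[of k n] by auto

lemma nth_less_if_words: "L \<in> words k n \<Longrightarrow> t < n \<Longrightarrow> L ! t < k"
  unfolding words_def by (metis (mono_tags, lifting) lessThan_iff mem_Collect_eq nth_mem subset_iff)

definition insert_at :: "nat \<Rightarrow> 'a \<Rightarrow> 'a list \<Rightarrow> 'a list" where
  "insert_at t v M = take t M @ v # drop t M"

definition delete_at :: "nat \<Rightarrow> 'a list \<Rightarrow> 'a list" where
  "delete_at t L = take t L @ drop (Suc t) L"

lemma nth_insert_at: "t \<le> length M \<Longrightarrow> insert_at t v M ! t = v"
  by (simp add: insert_at_def nth_append)

lemma delete_at_insert_at: "t \<le> length M \<Longrightarrow> delete_at t (insert_at t v M) = M"
  by (simp add: insert_at_def delete_at_def)

lemma insert_at_delete_at: "t < length L \<Longrightarrow> insert_at t (L ! t) (delete_at t L) = L"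
  by (simp add: insert_at_def delete_at_def min_def id_take_nth_drop[symmetric])

lemma insert_at_in_words:
  "M \<in> words k m \<Longrightarrow> v < k \<Longrightarrow> t \<le> m \<Longrightarrow> insert_at t v M \<in> words k (Suc m)"
  using set_take_subset[of t M] set_drop_subset[of t M] by (auto simp: words_def insert_at_def)

lemma delete_at_in_words:
  "L \<in> words k (Suc m) \<Longrightarrow> t \<le> m \<Longrightarrow> delete_at t L \<in> words k m"
  using set_take_subset[of t L] set_drop_subset[of "Suc t" L] by (auto simp: words_def delete_at_def)

lemma stable_rank_insert_at:
  "t \<le> length M \<Longrightarrow> stable_rank (insert_at t v M) v t = stable_rank M v t"
proof -
  have "count_list (insert_at t v M) a = count_list M a" if "a < v" for a
    using that by (metis insert_at_def append_take_drop_id count_list.simps(2) count_list_append less_irrefl)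
  moreover assume "t \<le> length M"
  ultimately show ?thesis
    by (simp add: stable_rank_def insert_at_def)
qed

text \<open>In the deck with pile labels \<open>L\<close>, the card at (0-based) position \<open>t\<close> is
  \<open>Suc (stable_rank L (L ! t) t)\<close>; after reversal, position \<open>t\<close> is a fixed point iff this
  card is \<open>length L - t\<close>.\<close>
definition reversed_fixed_points :: "nat list \<Rightarrow> nat" where
  "reversed_fixed_points L = card {t. t < length L \<and> stable_rank L (L ! t) t + t + 1 = length L}"

definition reversed_fixed_points_sum :: "nat \<Rightarrow> nat \<Rightarrow> nat" where
  "reversed_fixed_points_sum k n = (\<Sum>L\<in>words k n. reversed_fixed_points L)"

lemma reversed_fixed_points_sum_eq_card:
  "reversed_fixed_points_sum k n
     = card (SIGMA L:words k n. {t. t < n \<and> stable_rank L (L ! t) t + t + 1 = n})"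
  by (simp add: reversed_fixed_points_sum_def reversed_fixed_points_def card_SigmaI finite_words)
     (simp add: words_def)

lemma bij_betw_insert_at:
  "bij_betw (\<lambda>((M, v), t). (insert_at t v M, t))
     (SIGMA (M, v):words k m \<times> {..<k}. {t. t \<le> m \<and> stable_rank M v t + t = m})
     (SIGMA L:words k (Suc m). {t. t < Suc m \<and> stable_rank L (L ! t) t + t + 1 = Suc m})"
    (is "bij_betw _ ?A ?B")
proof (rule bij_betw_byWitness[where f' = "\<lambda>(L, t). ((delete_at t L, L ! t), t)"])
  show "\<forall>p\<in>?A. (\<lambda>(L, t). ((delete_at t L, L ! t), t)) ((\<lambda>((M, v), t). (insert_at t v M, t)) p) = p"
    by (auto simp: words_def delete_at_insert_at nth_insert_at)
  show "\<forall>q\<in>?B. (\<lambda>((M, v), t). (insert_at t v M, t)) ((\<lambda>(L, t). ((delete_at t L, L ! t), t)) q) = q"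
    by (auto simp: words_def insert_at_delete_at)
  show "(\<lambda>((M, v), t). (insert_at t v M, t)) ` ?A \<subseteq> ?B"
  proof
    fix q assume "q \<in> (\<lambda>((M, v), t). (insert_at t v M, t)) ` ?A"
    then obtain M v t where M: "M \<in> words k m" and "v < k" "t \<le> m"
      and "stable_rank M v t + t = m" "q = (insert_at t v M, t)"
      by auto
    moreover have "length M = m"
      using M by (simp add: words_def)
    ultimately show "q \<in> ?B"
      by (simp add: insert_at_in_words nth_insert_at stable_rank_insert_at)
  qed
  show "(\<lambda>(L, t). ((delete_at t L, L ! t), t)) ` ?B \<subseteq> ?A"
  proof
    fix p assume "p \<in> (\<lambda>(L, t). ((delete_at t L, L ! t), t)) ` ?B"
    then obtain L t where L: "L \<in> words k (Suc m)" and t: "t \<le> m"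
      and hit: "stable_rank L (L ! t) t + t = m" and p: "p = ((delete_at t L, L ! t), t)"
      by auto
    have "length L = Suc m"
      using L by (simp add: words_def)
    then have "stable_rank (delete_at t L) (L ! t) t = stable_rank L (L ! t) t"
      using stable_rank_insert_at[of t "delete_at t L" "L ! t"] t
      by (simp add: insert_at_delete_at) (simp add: delete_at_def)
    then show "p \<in> ?A"
      using L t hit by (simp add: p delete_at_in_words nth_less_if_words)
  qed
qed

lemma reversed_fixed_points_sum_Suc:
  "reversed_fixed_points_sum k (Suc m)
     = (\<Sum>(M, v)\<in>words k m \<times> {..<k}. card {t. t \<le> m \<and> stable_rank M v t + t = m})"
  using bij_betw_same_card[OF bij_betw_insert_at[of k m]]
  by (simp add: reversed_fixed_points_sum_eq_card card_SigmaI finite_words split_def)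

lemma reversed_fixed_points_sum_by_letter:
  "reversed_fixed_points_sum k m
     = (\<Sum>(M, v)\<in>words k m \<times> {..<k}.
          card {t. t < m \<and> M ! t = v \<and> stable_rank M v t + t + 1 = m})"
proof -
  let ?A = "SIGMA (M, v):words k m \<times> {..<k}. {t. t < m \<and> M ! t = v \<and> stable_rank M v t + t + 1 = m}"
  let ?B = "SIGMA L:words k m. {t. t < m \<and> stable_rank L (L ! t) t + t + 1 = m}"
  have "bij_betw (\<lambda>((M, v), t). (M, t)) ?A ?B"
    by (rule bij_betw_byWitness[where f' = "\<lambda>(L, t). ((L, L ! t), t)"])
       (auto simp: nth_less_if_words)
  then have "card ?B = card ?A"
    by (rule bij_betw_same_card[symmetric])
  then show ?thesis
    by (simp add: reversed_fixed_points_sum_eq_card card_SigmaI finite_words split_def)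
qed

lemma reversed_fixed_points_sum_Suc_add:
  "reversed_fixed_points_sum k (Suc m) + reversed_fixed_points_sum k m = k ^ Suc m"
proof -
  have "card {t. t \<le> m \<and> stable_rank M v t + t = m}
      + card {t. t < m \<and> M ! t = v \<and> stable_rank M v t + t + 1 = m} = 1"
    if "(M, v) \<in> words k m \<times> {..<k}" for M v
    using that by (intro card_stable_rank_hit_or_skip) (simp add: words_def)
  then have "reversed_fixed_points_sum k (Suc m) + reversed_fixed_points_sum k m
      = (\<Sum>(M, v)\<in>words k m \<times> {..<k}. 1)"
    unfolding reversed_fixed_points_sum_Suc reversed_fixed_points_sum_by_letter[of k m]
      sum.distrib[symmetric]
    by (intro sum.cong refl) auto
  also have "\<dots> = k ^ Suc m"
    by (simp add: card_cartesian_product card_words)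
  finally show ?thesis .
qed

lemma reversed_fixed_points_sum_div_power:
  assumes "k \<ge> 1"
  shows "real (reversed_fixed_points_sum k n) / real k ^ n = (\<Sum>i<n. (-1) ^ i / real k ^ i)"
proof (induction n)
  case 0
  have "words k 0 = {[]}"
    by (auto simp: words_def)
  then show ?case
    by (simp add: reversed_fixed_points_sum_def reversed_fixed_points_def)
next
  case (Suc n)
  have "real (reversed_fixed_points_sum k (Suc n)) = real k ^ Suc n - real (reversed_fixed_points_sum k n)"
    using reversed_fixed_points_sum_Suc_add[of k n] by (metis add_diff_cancel_right' of_nat_add of_nat_power)
  then have "real (reversed_fixed_points_sum k (Suc n)) / real k ^ Suc n
      = 1 - real (reversed_fixed_points_sum k n) / real k ^ n / real k"
    using assms by (simp add: field_simps)
  also have "\<dots> = 1 - (\<Sum>i<n. (-1) ^ i / real k ^ i) / real k"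
    by (simp add: Suc.IH)
  also have "\<dots> = (\<Sum>i<Suc n. (-1) ^ i / real k ^ i)"
    unfolding sum.lessThan_Suc_shift by (simp add: sum_divide_distrib sum_negf[symmetric] mult.commute)
  finally show ?case .
qed

section \<open>Dropping cards by pile labels\<close>

fun interleave :: "'a list list \<Rightarrow> nat list \<Rightarrow> 'a list" where
  "interleave ps [] = []"
| "interleave ps (a # L) = hd (ps ! a) # interleave (ps[a := tl (ps ! a)]) L"

primrec pile_choices :: "nat \<Rightarrow> 'a list list \<Rightarrow> nat list pmf" where
  "pile_choices 0 ps = return_pmf []"
| "pile_choices (Suc m) ps =
     bind_pmf (pmf_of_set {(i, j). i < length ps \<and> j < length (ps ! i)})
       (\<lambda>(i, j). map_pmf (Cons i) (pile_choices m (ps[i := tl (ps ! i)])))"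

lemma drop_cards_eq_map_interleave: "drop_cards m ps = map_pmf (interleave ps) (pile_choices m ps)"
  by (induction m arbitrary: ps) (simp_all add: map_bind_pmf map_pmf_comp split_def o_def)

definition has_counts :: "nat list \<Rightarrow> nat list \<Rightarrow> bool" where
  "has_counts cs L \<longleftrightarrow> set L \<subseteq> {..<length cs} \<and> (\<forall>a<length cs. count_list L a = cs ! a)"

lemma length_if_has_counts: "has_counts cs L \<Longrightarrow> length L = sum_list cs"
proof -
  assume L: "has_counts cs L"
  then have "length L = (\<Sum>a<length cs. count_list L a)"
    by (intro sum_count_set[symmetric]) (auto simp: has_counts_def)
  also have "\<dots> = sum_list cs"
    using L by (simp add: has_counts_def sum_list_sum_nth atLeast0LessThan)
  finally show ?thesis .
qed

lemma has_counts_unique: "has_counts cs L \<Longrightarrow> cs = map (count_list L) [0..<length cs]"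
  by (intro nth_equalityI) (auto simp: has_counts_def)

lemma has_counts_Nil_iff:
  assumes "sum_list cs = 0"
  shows "has_counts cs L \<longleftrightarrow> L = []"
proof
  show "has_counts cs L \<Longrightarrow> L = []"
    by (metis assms length_if_has_counts length_0_conv)
  show "L = [] \<Longrightarrow> has_counts cs L"
    using assms by (auto simp: has_counts_def)
qed

lemma has_counts_Cons_iff:
  assumes "a < length cs" "0 < cs ! a"
  shows "has_counts cs (a # L) \<longleftrightarrow> has_counts (cs[a := cs ! a - 1]) L"
proof -
  have "count_list (a # L) b = cs ! b \<longleftrightarrow> count_list L b = cs[a := cs ! a - 1] ! b"
    if "b < length cs" for b
    using assms that by (auto simp: nth_list_update)
  then show ?thesis
    using assms(1) by (auto simp: has_counts_def)
qed

lemma prod_fact_list_update: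
  "a < length cs \<Longrightarrow> 0 < cs ! a
    \<Longrightarrow> (\<Prod>c\<leftarrow>cs. fact c) = real (cs ! a) * (\<Prod>c\<leftarrow>cs[a := cs ! a - 1]. fact c)"
proof (induction cs arbitrary: a)
  case (Cons c cs)
  then show ?case
    by (cases a) (simp_all add: fact_reduce)
qed simp

lemma pmf_map_Cons_Cons: "pmf (map_pmf (Cons i) p) (a # L) = (if i = a then pmf p L else 0)"
  by (auto simp: pmf_map_inj' inj_def intro: pmf_map_outside)

lemma pmf_pile_choices_Suc_Cons:
  assumes "sum_list (map length ps) = Suc m"
  shows "pmf (pile_choices (Suc m) ps) (a # L)
    = (if a < length ps
       then length (ps ! a) / Suc m * pmf (pile_choices m (ps[a := tl (ps ! a)])) L else 0)"
proof -
  define P where "P = (SIGMA i:{..<length ps}. {..<length (ps ! i)})"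
  have P_eq: "{(i, j). i < length ps \<and> j < length (ps ! i)} = P"
    by (auto simp: P_def)
  have "card P = Suc m"
    using assms by (simp add: P_def sum_list_sum_nth atLeast0LessThan)
  moreover have "finite P"
    by (simp add: P_def)
  ultimately have "P \<noteq> {}"
    by auto
  with \<open>finite P\<close> have "pmf (pile_choices (Suc m) ps) (a # L)
      = (\<Sum>(i, j)\<in>P. pmf (map_pmf (Cons i) (pile_choices m (ps[i := tl (ps ! i)]))) (a # L)) / Suc m"
    using \<open>card P = Suc m\<close> unfolding pile_choices.simps P_eq
    by (simp add: pmf_bind integral_pmf_of_set split_def)
  also have "\<dots> = (\<Sum>(i, j)\<in>P. if i = a then pmf (pile_choices m (ps[a := tl (ps ! a)])) L else 0) / Suc m"
    by (intro arg_cong2[where f = "(/)"] sum.cong refl) (auto simp: pmf_map_Cons_Cons)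
  also have "\<dots> = (\<Sum>i<length ps. \<Sum>j<length (ps ! i).
      if i = a then pmf (pile_choices m (ps[a := tl (ps ! a)])) L else 0) / Suc m"
    unfolding P_def by (subst sum.Sigma) (auto simp: split_def)
  also have "\<dots> = (\<Sum>i<length ps.
      if i = a then length (ps ! a) * pmf (pile_choices m (ps[a := tl (ps ! a)])) L else 0) / Suc m"
    by (intro arg_cong2[where f = "(/)"] sum.cong refl) auto
  also have "\<dots> = (if a < length ps
      then length (ps ! a) / Suc m * pmf (pile_choices m (ps[a := tl (ps ! a)])) L else 0)"
    by (simp add: sum.delta)
  finally show ?thesis .
qed

lemma pmf_pile_choices:
  assumes "map length ps = cs" "sum_list cs = m"
  shows "pmf (pile_choices m ps) L = (if has_counts cs L then (\<Prod>c\<leftarrow>cs. fact c) / fact m else 0)"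
  using assms
proof (induction m arbitrary: ps cs L)
  case 0
  then have "\<forall>c\<in>set cs. c = 0"
    by simp
  then have "(\<Prod>c\<leftarrow>cs. fact c) = (1 :: real)"
    by (induction cs) auto
  with 0 show ?case
    by (simp add: has_counts_Nil_iff indicator_def)
next
  case (Suc m)
  have step: "pmf (pile_choices (Suc m) ps) (a # L')
      = (if a < length ps
         then length (ps ! a) / Suc m * pmf (pile_choices m (ps[a := tl (ps ! a)])) L' else 0)" for a L'
    by (rule pmf_pile_choices_Suc_Cons) (use Suc.prems in simp)
  show ?case
  proof (cases L)
    case Nil
    have "\<not> has_counts cs L"
      using Suc.prems length_if_has_counts[of cs L] Nil by auto
    moreover have "pmf (pile_choices (Suc m) ps) L = 0"
      using Nil by (auto simp: pmf_eq_0_set_pmf)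
    ultimately show ?thesis
      by simp
  next
    case (Cons a L')
    show ?thesis
    proof (cases "a < length cs \<and> 0 < cs ! a")
      case False
      then have "\<not> has_counts cs L"
        using Cons by (auto simp: has_counts_def)
      moreover have "pmf (pile_choices (Suc m) ps) L = 0"
        using False Suc.prems(1) unfolding Cons step by auto
      ultimately show ?thesis
        by simp
    next
      case True
      let ?cs' = "cs[a := cs ! a - 1]"
      have "map length (ps[a := tl (ps ! a)]) = ?cs'" "sum_list ?cs' = m"
        using True Suc.prems by (auto simp: map_update sum_list_update)
      note IH = Suc.IH[OF this]
      have "pmf (pile_choices (Suc m) ps) L
          = cs ! a / Suc m * (if has_counts ?cs' L' then (\<Prod>c\<leftarrow>?cs'. fact c) / fact m else 0)"
        using True Suc.prems(1) unfolding Cons step IH by auto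
      also have "\<dots> = (if has_counts cs L then (\<Prod>c\<leftarrow>cs. fact c) / fact (Suc m) else 0)"
        using True by (simp add: Cons has_counts_Cons_iff prod_fact_list_update[of a cs])
      finally show ?thesis .
    qed
  qed
qed

lemma prod_fact_pos: "0 < (\<Prod>c\<leftarrow>cs. fact c :: real)"
  by (induction cs) auto

lemma finite_has_counts: "finite {L. has_counts cs L}"
proof (rule finite_subset)
  show "{L. has_counts cs L} \<subseteq> {L. set L \<subseteq> {..<length cs} \<and> length L = sum_list cs}"
    using length_if_has_counts unfolding has_counts_def by blast
  show "finite {L. set L \<subseteq> {..<length cs} \<and> length L = sum_list cs}"
    by (rule finite_lists_length_eq) simp
qed

text \<open>Read off from the probabilities of \<open>pile_choices\<close> summing to one.\<close>
lemma card_has_counts: "real (card {L. has_counts cs L}) = fact (sum_list cs) / (\<Prod>c\<leftarrow>cs. fact c)"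
proof -
  define ps where "ps = map (\<lambda>c. replicate c ()) cs"
  have ps: "map length ps = cs"
    by (simp add: ps_def comp_def)
  have "set_pmf (pile_choices (sum_list cs) ps) \<subseteq> {L. has_counts cs L}"
    by (auto simp: set_pmf_eq pmf_pile_choices[OF ps] split: if_splits)
  then have "1 = (\<Sum>L\<in>{L. has_counts cs L}. pmf (pile_choices (sum_list cs) ps) L)"
    by (rule sum_pmf_eq_1[OF finite_has_counts, symmetric])
  also have "\<dots> = card {L. has_counts cs L} * ((\<Prod>c\<leftarrow>cs. fact c) / fact (sum_list cs))"
    by (simp add: pmf_pile_choices[OF ps])
  finally show ?thesis
    using prod_fact_pos[of cs] by (simp add: field_simps)
qed

lemma card_has_counts_pos: "0 < card {L. has_counts cs L}"
  using card_has_counts[of cs] prod_fact_pos[of cs] by (metis divide_pos_pos fact_gt_zero of_nat_0_less_iff)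

lemma pile_choices_uniform:
  assumes "map length ps = cs" "sum_list cs = m"
  shows "pile_choices m ps = pmf_of_set {L. has_counts cs L}"
proof (rule pmf_eqI)
  fix L
  show "pmf (pile_choices m ps) L = pmf (pmf_of_set {L. has_counts cs L}) L"
    using assms card_has_counts[of cs] card_has_counts_pos[of cs]
    by (auto simp: pmf_pile_choices card_gt_0_iff)
qed

section \<open>The label word of a riffle shuffle is uniform\<close>

definition weak_compositions :: "nat \<Rightarrow> nat \<Rightarrow> nat list set" where
  "weak_compositions k n = {js. length js = k \<and> sum_list js = n}"

lemma finite_weak_compositions: "finite (weak_compositions k n)"
proof (rule finite_subset)
  show "weak_compositions k n \<subseteq> {js. set js \<subseteq> {..n} \<and> length js = k}"
    by (auto simp: weak_compositions_def member_le_sum_list)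
  show "finite {js. set js \<subseteq> {..n} \<and> length js = k}"
    by (rule finite_lists_length_eq) simp
qed

lemma weak_compositions_has_counts:
  "{js \<in> weak_compositions k n. has_counts js L}
     = (if L \<in> words k n then {map (count_list L) [0..<k]} else {})"
proof -
  have unique: "js = map (count_list L) [0..<k]" if "js \<in> weak_compositions k n" "has_counts js L" for js
    using that has_counts_unique[of js L] by (simp add: weak_compositions_def)
  have words: "L \<in> words k n" if "js \<in> weak_compositions k n" "has_counts js L" for js
    using that length_if_has_counts[OF that(2)]
    by (simp add: weak_compositions_def words_def has_counts_def)
  show ?thesis
  proof (cases "L \<in> words k n")
    case True
    then have L: "set L \<subseteq> {..<k}" "length L = n"
      by (auto simp: words_def)
    then have "sum_list (map (count_list L) [0..<k]) = n"
      by (simp add: interv_sum_list_conv_sum_set_nat atLeast0LessThan sum_count_set)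
    moreover have "has_counts (map (count_list L) [0..<k]) L"
      using L by (simp add: has_counts_def)
    ultimately show ?thesis
      using True unique by (auto simp: weak_compositions_def)
  next
    case False
    then show ?thesis
      using words by auto
  qed
qed

lemma sum_card_has_counts: "(\<Sum>js\<in>weak_compositions k n. card {L. has_counts js L}) = k ^ n"
proof -
  have "(\<Sum>js\<in>weak_compositions k n. card {L. has_counts js L})
      = card (\<Union>js\<in>weak_compositions k n. {L. has_counts js L})"
  proof (intro card_UN_disjoint[symmetric] finite_weak_compositions ballI finite_has_counts impI)
    fix js js' assume "js \<in> weak_compositions k n" "js' \<in> weak_compositions k n" "js \<noteq> js'"
    then show "{L. has_counts js L} \<inter> {L. has_counts js' L} = {}"
      using has_counts_unique[of js] has_counts_unique[of js'] by (auto simp: weak_compositions_def)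
  qed
  also have "(\<Union>js\<in>weak_compositions k n. {L. has_counts js L}) = words k n"
  proof -
    have "(\<exists>js\<in>weak_compositions k n. has_counts js L) \<longleftrightarrow> L \<in> words k n" for L
      using arg_cong[where f = "\<lambda>S. S \<noteq> {}", OF weak_compositions_has_counts[of k n L]]
      by (auto split: if_splits)
    then show ?thesis
      by blast
  qed
  finally show ?thesis
    by (simp add: card_words)
qed

lemma pmf_cut_pmf:
  assumes "k \<ge> 1"
  shows "pmf (cut_pmf k n) js
    = (if js \<in> weak_compositions k n then card {L. has_counts js L} / real k ^ n else 0)"
proof -
  let ?f = "\<lambda>js. if js \<in> weak_compositions k n then card {L. has_counts js L} / real k ^ n else 0"
  have weight: "(\<lambda>js. if length js = k \<and> sum_list js = n
      then fact n / (\<Prod>j\<leftarrow>js. fact j) / real k ^ n else 0) = ?f"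
    by (auto simp: weak_compositions_def card_has_counts)
  have "(\<integral>\<^sup>+js. ennreal (?f js) \<partial>count_space UNIV) = (\<Sum>js\<in>weak_compositions k n. ennreal (?f js))"
    by (rule nn_integral_count_space'[OF finite_weak_compositions]) auto
  also have "\<dots> = ennreal (\<Sum>js\<in>weak_compositions k n. card {L. has_counts js L} / real k ^ n)"
    by (simp add: sum_ennreal)
  also have "\<dots> = 1"
    using assms
    by (simp add: sum_divide_distrib[symmetric] sum_card_has_counts flip: of_nat_sum of_nat_power)
  finally show ?thesis
    unfolding cut_pmf_def weight by (subst pmf_embed_pmf) auto
qed

lemma length_cut_deck: "sum_list js \<le> length xs \<Longrightarrow> map length (cut_deck js xs) = js"
  by (induction js arbitrary: xs) auto

lemma bind_cut_pmf_pile_choices: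
  assumes "k \<ge> 1" "length xs = n"
  shows "bind_pmf (cut_pmf k n) (\<lambda>js. pile_choices n (cut_deck js xs)) = pmf_of_set (words k n)"
proof (rule pmf_eqI)
  fix L
  have choices: "pile_choices n (cut_deck js xs) = pmf_of_set {L. has_counts js L}"
    if "js \<in> weak_compositions k n" for js
    using that assms(2) by (intro pile_choices_uniform length_cut_deck) (auto simp: weak_compositions_def)
  have "pmf (bind_pmf (cut_pmf k n) (\<lambda>js. pile_choices n (cut_deck js xs))) L
      = (\<Sum>js\<in>weak_compositions k n. pmf (pile_choices n (cut_deck js xs)) L * pmf (cut_pmf k n) js)"
    unfolding pmf_bind
    by (rule integral_measure_pmf_real[OF finite_weak_compositions])
       (auto simp: set_pmf_eq pmf_cut_pmf[OF assms(1)] split: if_splits)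
  also have "\<dots> = (\<Sum>js\<in>weak_compositions k n. of_bool (has_counts js L) / real k ^ n)"
  proof (intro sum.cong refl)
    fix js assume js: "js \<in> weak_compositions k n"
    have "card {L. has_counts js L} \<noteq> 0"
      using card_has_counts_pos[of js] by simp
    then show "pmf (pile_choices n (cut_deck js xs)) L * pmf (cut_pmf k n) js
        = of_bool (has_counts js L) / real k ^ n"
      using js finite_has_counts[of js] by (simp add: choices pmf_cut_pmf[OF assms(1)])
  qed
  also have "\<dots> = card {js \<in> weak_compositions k n. has_counts js L} / real k ^ n"
    using finite_weak_compositions by (simp add: sum_divide_distrib[symmetric] Int_def)
  also have "\<dots> = pmf (pmf_of_set (words k n)) L"
    using finite_words words_nonempty[OF assms(1)]
    by (simp add: weak_compositions_has_counts card_words indicator_def)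
  finally show "pmf (bind_pmf (cut_pmf k n) (\<lambda>js. pile_choices n (cut_deck js xs))) L
      = pmf (pmf_of_set (words k n)) L" .
qed

section \<open>Fixed points of the reversed shuffle\<close>

lemma nth_cut_deck:
  "sum_list js \<le> length xs \<Longrightarrow> a < length js \<Longrightarrow> x < js ! a
    \<Longrightarrow> cut_deck js xs ! a ! x = xs ! (sum_list (take a js) + x)"
proof (induction js arbitrary: xs a)
  case (Cons j js)
  then show ?case
    by (cases a) (simp_all add: add.assoc)
qed simp

lemma nth_interleave:
  assumes "has_counts (map length ps) L" "t < length L"
  shows "interleave ps L ! t = ps ! (L ! t) ! count_list (take t L) (L ! t)"
  using assms
proof (induction L arbitrary: ps t)
  case Nil
  then show ?case by simp
next
  case (Cons a L)
  have a: "a < length ps" and pos: "0 < length (ps ! a)"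
    using Cons.prems(1) by (auto simp: has_counts_def)
  let ?ps' = "ps[a := tl (ps ! a)]"
  have counts': "has_counts (map length ?ps') L"
    using has_counts_Cons_iff[of a "map length ps" L] a pos Cons.prems(1) by (simp add: map_update)
  show ?case
  proof (cases t)
    case 0
    then show ?thesis
      using pos by (simp add: hd_conv_nth)
  next
    case (Suc t')
    then have t': "t' < length L"
      using Cons.prems(2) by simp
    have IH: "interleave ?ps' L ! t' = ?ps' ! (L ! t') ! count_list (take t' L) (L ! t')"
      by (rule Cons.IH[OF counts' t'])
    show ?thesis
    proof (cases "L ! t' = a")
      case True
      have "count_list (take t' L) a < count_list L a"
        using count_list_take_less[OF t'] True by simp
      also have "count_list L a = length (tl (ps ! a))"
        using counts' a by (simp add: has_counts_def)
      finally show ?thesis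
        using IH True Suc a by (simp add: nth_tl)
    next
      case False
      then show ?thesis
        using IH Suc a by simp
    qed
  qed
qed

lemma nth_interleave_cut_deck:
  assumes L: "has_counts js L" and xs: "length xs = sum_list js" and t: "t < length L"
  shows "interleave (cut_deck js xs) L ! t = xs ! stable_rank L (L ! t) t"
proof -
  let ?v = "L ! t"
  have "?v \<in> set L"
    using t by simp
  then have v: "?v < length js"
    using L by (auto simp: has_counts_def)
  have c: "count_list (take t L) ?v < js ! ?v"
    using count_list_take_less[OF t] L v by (simp add: has_counts_def)
  have "map length (cut_deck js xs) = js"
    using xs by (simp add: length_cut_deck)
  then have "interleave (cut_deck js xs) L ! t = cut_deck js xs ! ?v ! count_list (take t L) ?v"
    using L t by (simp add: nth_interleave)
  also have "\<dots> = xs ! (sum_list (take ?v js) + count_list (take t L) ?v)"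
    using xs v c by (simp add: nth_cut_deck)
  also have "sum_list (take ?v js) = (\<Sum>a<?v. count_list L a)"
    using v L by (simp add: sum_list_sum_nth atLeast0LessThan min_def has_counts_def)
  finally show ?thesis
    by (simp add: stable_rank_def)
qed

lemma num_fixed_points_reversed:
  "num_fixed_points n (perm_of_deck d \<circ> w0 n) = card {t. t < n \<and> d ! t + t = n}"
proof -
  have "bij_betw (\<lambda>t. n - t) {t. t < n \<and> d ! t + t = n} {i \<in> {1..n}. (perm_of_deck d \<circ> w0 n) i = i}"
    by (rule bij_betw_byWitness[where f' = "\<lambda>i. n - i"]) (auto simp: perm_of_deck_def w0_def)
  then show ?thesis
    unfolding num_fixed_points_def by (simp add: bij_betw_same_card)
qed

lemma num_fixed_points_interleave_cut_deck:
  assumes L: "has_counts js L" and n: "sum_list js = n"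
  shows "num_fixed_points n (perm_of_deck (interleave (cut_deck js [1..<n+1]) L) \<circ> w0 n)
    = reversed_fixed_points L"
proof -
  let ?D = "[1..<n+1]"
  have len: "length L = n"
    using L n by (simp add: length_if_has_counts)
  have "interleave (cut_deck js ?D) L ! t = Suc (stable_rank L (L ! t) t)" if "t < n" for t
  proof -
    have "interleave (cut_deck js ?D) L ! t = ?D ! stable_rank L (L ! t) t"
      using n that len by (intro nth_interleave_cut_deck[OF L]) simp_all
    moreover have "stable_rank L (L ! t) t < n"
      using stable_rank_less_length[of t L] that len by simp
    ultimately show ?thesis
      by (simp add: nth_upt del: upt_Suc)
  qed
  then have "{t. t < n \<and> interleave (cut_deck js ?D) L ! t + t = n}
      = {t. t < length L \<and> stable_rank L (L ! t) t + t + 1 = length L}"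
    using len by auto
  then show ?thesis
    by (simp add: num_fixed_points_reversed reversed_fixed_points_def)
qed

lemma map_pmf_riffle_reversed_fixed_points:
  assumes "k \<ge> 1"
  shows "map_pmf (\<lambda>d. num_fixed_points n (perm_of_deck d \<circ> w0 n)) (riffle_pmf k n)
    = map_pmf reversed_fixed_points (pmf_of_set (words k n))"
proof -
  let ?D = "[1..<n+1]"
  let ?F = "\<lambda>d. num_fixed_points n (perm_of_deck d \<circ> w0 n)"
  have "map_pmf ?F (riffle_pmf k n) = bind_pmf (cut_pmf k n)
      (\<lambda>js. map_pmf (\<lambda>L. ?F (interleave (cut_deck js ?D) L)) (pile_choices n (cut_deck js ?D)))"
    unfolding riffle_pmf_def drop_cards_eq_map_interleave map_bind_pmf map_pmf_comp ..
  also have "\<dots> = bind_pmf (cut_pmf k n)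
      (\<lambda>js. map_pmf reversed_fixed_points (pile_choices n (cut_deck js ?D)))"
  proof (rule bind_pmf_cong[OF refl])
    fix js assume "js \<in> set_pmf (cut_pmf k n)"
    then have js: "js \<in> weak_compositions k n"
      using pmf_cut_pmf[OF assms] by (auto simp: set_pmf_eq split: if_splits)
    then have choices: "pile_choices n (cut_deck js ?D) = pmf_of_set {L. has_counts js L}"
      by (intro pile_choices_uniform length_cut_deck) (auto simp: weak_compositions_def)
    show "map_pmf (\<lambda>L. ?F (interleave (cut_deck js ?D) L)) (pile_choices n (cut_deck js ?D))
        = map_pmf reversed_fixed_points (pile_choices n (cut_deck js ?D))"
    proof (rule map_pmf_cong[OF refl])
      fix L assume "L \<in> set_pmf (pile_choices n (cut_deck js ?D))"
      then have "L \<in> set_pmf (pmf_of_set {L. has_counts js L})"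
        unfolding choices .
      then have "has_counts js L"
        using finite_has_counts[of js] card_has_counts_pos[of js] by (simp add: card_gt_0_iff)
      then show "?F (interleave (cut_deck js ?D) L) = reversed_fixed_points L"
        by (rule num_fixed_points_interleave_cut_deck) (use js in \<open>simp add: weak_compositions_def\<close>)
    qed
  qed
  also have "\<dots> = map_pmf reversed_fixed_points (bind_pmf (cut_pmf k n) (\<lambda>js. pile_choices n (cut_deck js ?D)))"
    unfolding map_bind_pmf ..
  also have "\<dots> = map_pmf reversed_fixed_points (pmf_of_set (words k n))"
    by (subst bind_cut_pmf_pile_choices[OF assms]) simp_all
  finally show ?thesis .
qed

theorem corollary4p2:
  fixes k n :: nat
  assumes "k \<ge> 1"
  shows "measure_pmf.expectation (riffle_pmf k n)
           (\<lambda>d. real (num_fixed_points n (perm_of_deck d \<circ> w0 n)))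
         = (\<Sum>i<n. (-1) ^ i / real k ^ i)"
proof -
  let ?F = "\<lambda>d. num_fixed_points n (perm_of_deck d \<circ> w0 n)"
  have "measure_pmf.expectation (riffle_pmf k n) (\<lambda>d. real (?F d))
      = measure_pmf.expectation (map_pmf ?F (riffle_pmf k n)) real"
    by simp
  also have "\<dots> = measure_pmf.expectation (pmf_of_set (words k n)) (\<lambda>L. real (reversed_fixed_points L))"
    by (simp add: map_pmf_riffle_reversed_fixed_points[OF assms])
  also have "\<dots> = real (reversed_fixed_points_sum k n) / real k ^ n"
    using finite_words words_nonempty[OF assms]
    by (simp add: integral_pmf_of_set card_words reversed_fixed_points_sum_def)
  also have "\<dots> = (\<Sum>i<n. (-1) ^ i / real k ^ i)"
    by (rule reversed_fixed_points_sum_div_power[OF assms])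
  finally show ?thesis .
qed

end
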